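(* Let $r\in\mathbb{N}_0$, $m=r+1$, and let $x_0\le x_1\le\dots\le x_m$ be real numbers with $x_0<x_m$. If $f\in C^{(r)}[x_0,x_m]$, then \[ \big|[x_0,\dots,x_m;f]\big|\le c\,\Lambda_r(x_0,\dots,x_m;\omega_1), \] where $\omega_1(t):=\omega_1(f^{(r)},t;[x_0,x_m])$ and the constant $c$ depends only on $m$.
   Context: Modulus of smoothness: for $g\in C[a,b]$, $k\in\mathbb{N}$, $\Delta^k_u(g,x;[a,b]):=\sum_{i=0}^k(-1)^i\binom ki g(x+(k/2-i)u)$ if $x\pm(k/2)u\in[a,b]$, else $0$; $\omega_k(g,t;[a,b]):=\sup_{0<u\le t}\|\Delta^k_u(g,\cdot;[a,b])\|_{C[a,b]}$. Divided differences with repeated points: $[x_0;f]:=f(x_0)$; if $x_0=\dots=x_m$, $[x_0,\dots,x_m;f]:=f^{(m)}(x_0)/m!$; otherwise for $j^*$ with $x_{j^*}\ne x_0$, $[x_0,\dots,x_m;f]:=\frac{[x_1,\dots,x_m;f]-[x_0,\dots,x_{j^*-1},x_{j^*+1},\dots,x_m;f]}{x_{j^*}-x_0}$. For ordered $y_0\le\dots\le y_n$: $\mathcal{Q}_{n,r}:=\{(p,q):0\le p,q\le n,\ q-p\ge r+1\}$, $y_{-1}:=y_0-(y_n-y_0)$, $y_{n+1}:=y_n+(y_n-y_0)$, $d(p,q):=\min\{y_{q+1}-y_p,y_q-y_{p-1}\}$, and for nondecreasing $\varphi\in C[0,\infty]$ with $\varphi(0)=0$, $\Lambda_{p,q,r}(y_0,\dots,y_n;\varphi):=\frac{\int_{y_q-y_p}^{d(p,q)}u^{p+r-q-1}\varphi(u)du}{\prod_{i=0}^{p-1}(y_q-y_i)\prod_{i=q+1}^{n}(y_i-y_p)}$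 (empty products $=1$), $\Lambda_r(y_0,\dots,y_n;\varphi):=\max_{(p,q)\in\mathcal{Q}_{n,r}}\Lambda_{p,q,r}(y_0,\dots,y_n;\varphi)$. *)

theory Defs
  imports "HOL-Analysis.Analysis"
begin

definition Delta :: "nat \<Rightarrow> real \<Rightarrow> (real \<Rightarrow> real) \<Rightarrow> real \<Rightarrow> real \<Rightarrow> real \<Rightarrow> real" where
  "Delta k u g a b x =
     (if a \<le> x - (real k / 2) * u \<and> x + (real k / 2) * u \<le> b
      then (\<Sum>i=0..k. (-1) ^ i * real (k choose i) * g (x + (real k / 2 - real i) * u))
      else 0)"

text \<open>Sup over 0<u<=t of the sup norm on [a,b]; the value 0 is included so that omega(0)=0.\<close>
definition omega :: "nat \<Rightarrow> (real \<Rightarrow> real) \<Rightarrow> real \<Rightarrow> real \<Rightarrow> real \<Rightarrow> real" where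
  "omega k g t a b =
     Sup (insert 0 {\<bar>Delta k u g a b x\<bar> | u x. 0 < u \<and> u \<le> t \<and> x \<in> {a..b}})"

text \<open>Divided difference with repeated points. D k is the k-th derivative of f
  (D 0 = f). If not all points coincide, j* is the first index with x_j* \<noteq> x_0.\<close>
function divdiff :: "(nat \<Rightarrow> real \<Rightarrow> real) \<Rightarrow> real list \<Rightarrow> real" where
  "divdiff D [] = 0"
| "divdiff D (x0 # xs) =
     (if \<forall>y\<in>set xs. y = x0 then D (length xs) x0 / fact (length xs)
      else (let y = hd (filter (\<lambda>y. y \<noteq> x0) xs) in
            (divdiff D xs - divdiff D (x0 # remove1 y xs)) / (y - x0)))"
  by pat_completeness auto
termination
proof (relation "Wellfounded.measure (\<lambda>(D, xs). length xs)", goal_cases)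
  case 1 show ?case by simp
next
  case 2 show ?case by simp
next
  case (3 D x0 xs y)
  then have ne: "filter (\<lambda>y. y \<noteq> x0) xs \<noteq> []" by (auto simp: filter_empty_conv)
  have "y \<in> set (filter (\<lambda>y. y \<noteq> x0) xs)" using 3 ne hd_in_set by metis
  then have "y \<in> set xs" by simp
  then have "length xs > 0" by (metis length_pos_if_in_set)
  then show ?case using `y \<in> set xs` by (simp add: length_remove1)
qed

definition yext :: "(nat \<Rightarrow> real) \<Rightarrow> nat \<Rightarrow> int \<Rightarrow> real" where
  "yext y n i = (if i < 0 then y 0 - (y n - y 0)
                 else if i > int n then y n + (y n - y 0) else y (nat i))"

definition dpq :: "(nat \<Rightarrow> real) \<Rightarrow> nat \<Rightarrow> nat \<Rightarrow> nat \<Rightarrow> real" where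
  "dpq y n p q = min (yext y n (int q + 1) - y p) (y q - yext y n (int p - 1))"

definition Lambda_pqr :: "nat \<Rightarrow> nat \<Rightarrow> nat \<Rightarrow> (nat \<Rightarrow> real) \<Rightarrow> nat \<Rightarrow> (real \<Rightarrow> real) \<Rightarrow> real" where
  "Lambda_pqr p q r y n \<phi> =
     integral {y q - y p .. dpq y n p q} (\<lambda>u. u powi (int p + int r - int q - 1) * \<phi> u)
     / ((\<Prod>i<p. (y q - y i)) * (\<Prod>i\<in>{q+1..n}. (y i - y p)))"

definition Lambda :: "nat \<Rightarrow> (nat \<Rightarrow> real) \<Rightarrow> nat \<Rightarrow> (real \<Rightarrow> real) \<Rightarrow> real" where
  "Lambda r y n \<phi> = Max {Lambda_pqr p q r y n \<phi> | p q. p \<le> n \<and> q \<le> n \<and> p + r + 1 \<le> q}"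

end

(*
  Divided differences depend only on the multiset of nodes: the divided difference
  on k + 1 nodes is the coefficient of t^k of the Hermite interpolant of f at these
  nodes. Since the recursion defining divdiff removes the first node different from
  x_0 rather than an endpoint, this symmetry is what yields the recurrence
    (x_m - x_0) [x_0,...,x_m; f] = [x_1,...,x_m; f] - [x_0,...,x_(m-1); f].
  Applying the generalized Rolle theorem to f minus its interpolant, each divided
  difference on the right equals f^(r)(xi)/r! for some xi in [x_0, x_m], so
    |[x_0,...,x_m; f]| <= omega_1(f^(r), x_m - x_0) / (r! (x_m - x_0)).
  With only m + 1 = r + 2 nodes, (0, m) is the only admissible pair (p, q), and as
  omega_1(f^(r), u) is constant for u >= x_m - x_0, Lambda_r equals
  omega_1(f^(r), x_m - x_0) / (2 (x_m - x_0)). Hence c = 2 works.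
*)

theory Submission
  imports Defs "HOL-Computational_Algebra.Polynomial"
begin

lemma lift_Suc_mono_le_upto:
  fixes x :: "nat \<Rightarrow> 'a::order"
  assumes "\<forall>i<n. x i \<le> x (Suc i)" and "i \<le> j" and "j \<le> n"
  shows "x i \<le> x j"
proof -
  have "x (min i n) \<le> x (min j n)"
  proof (rule lift_Suc_mono_le[OF _ assms(2)])
    fix k show "x (min k n) \<le> x (min (Suc k) n)"
      using assms(1) by (cases "k < n") (simp_all add: min_def)
  qed
  then show ?thesis using assms(2,3) by simp
qed

lemma mset_map_upt_endpoints:
  "mset (map x [0..<n + 2]) = add_mset (x 0) (add_mset (x (n + 1)) (mset (map x [1..<n + 1])))"
proof -
  have "[0..<n + 2] = 0 # [1..<n + 1] @ [n + 1]"
    by (metis add_2_eq_Suc' le_add2 upt_Suc_append upt_conv_Cons zero_less_Suc Suc_eq_plus1 One_nat_def)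
  then show ?thesis by simp
qed

section \<open>Divided differences and Hermite interpolation\<close>

(* Left as a simp rule, the defining equation unfolds its own recursive call forever. *)
declare divdiff.simps(2) [simp del]

lemma divdiff_Cons_const:
  assumes "\<forall>y\<in>set xs. y = x0"
  shows "divdiff D (x0 # xs) = D (length xs) x0 / fact (length xs)"
  by (subst divdiff.simps(2)) (simp only: if_P[OF assms])

lemma divdiff_Cons_nonconst:
  assumes "\<not> (\<forall>y\<in>set xs. y = x0)" and "y = hd (filter (\<lambda>y. y \<noteq> x0) xs)"
  shows "divdiff D (x0 # xs) = (divdiff D xs - divdiff D (x0 # remove1 y xs)) / (y - x0)"
  by (subst divdiff.simps(2)) (simp only: if_not_P[OF assms(1)] Let_def assms(2))

lemma divdiff_linear:
  "divdiff (\<lambda>j t. a * D j t + b * E j t) xs = a * divdiff D xs + b * divdiff E xs"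
proof (induction D xs rule: divdiff.induct)
  case (2 D x0 xs)
  show ?case
  proof (cases "\<forall>y\<in>set xs. y = x0")
    case True
    then show ?thesis by (simp add: divdiff_Cons_const add_divide_distrib)
  next
    case False
    define y where "y = hd (filter (\<lambda>y. y \<noteq> x0) xs)"
    note step = divdiff_Cons_nonconst[OF False y_def]
    have "divdiff (\<lambda>j t. a * D j t + b * E j t) (x0 # xs)
      = ((a * divdiff D xs + b * divdiff E xs)
         - (a * divdiff D (x0 # remove1 y xs) + b * divdiff E (x0 # remove1 y xs))) / (y - x0)"
      using "2.IH"[OF False y_def] by (simp only: step)
    also have "\<dots> = a * ((divdiff D xs - divdiff D (x0 # remove1 y xs)) / (y - x0))
      + b * ((divdiff E xs - divdiff E (x0 # remove1 y xs)) / (y - x0))"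
      by (simp add: diff_divide_distrib add_divide_distrib right_diff_distrib)
    finally show ?thesis by (simp only: step)
  qed
qed simp

lemma divdiff_eq_0_if_node_derivs_0:
  "\<forall>z j. j < count (mset xs) z \<longrightarrow> D j z = 0 \<Longrightarrow> divdiff D xs = 0"
proof (induction D xs rule: divdiff.induct)
  case (2 D x0 xs)
  show ?case
  proof (cases "\<forall>y\<in>set xs. y = x0")
    case True
    then have "count (mset xs) x0 = length xs" by (induction xs) auto
    then show ?thesis using True "2.prems" by (simp add: divdiff_Cons_const)
  next
    case False
    define y where "y = hd (filter (\<lambda>y. y \<noteq> x0) xs)"
    have "count (mset xs) z \<le> count (mset (x0 # xs)) z"
      and "count (mset (x0 # remove1 y xs)) z \<le> count (mset (x0 # xs)) z" for z
      by (simp_all add: mset_remove1)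
    then have "divdiff D xs = 0" and "divdiff D (x0 # remove1 y xs) = 0"
      using "2.IH"[OF False y_def] "2.prems" by (meson order_less_le_trans)+
    then show ?thesis by (simp add: divdiff_Cons_nonconst[OF False y_def])
  qed
qed simp

lemma divdiff_cong_node_derivs:
  assumes "\<forall>z j. j < count (mset xs) z \<longrightarrow> D j z = E j z"
  shows "divdiff D xs = divdiff E xs"
proof -
  have "divdiff (\<lambda>j t. 1 * D j t + (-1) * E j t) xs = 0"
    using assms by (intro divdiff_eq_0_if_node_derivs_0) simp
  then show ?thesis by (simp only: divdiff_linear)
qed

definition poly_derivs :: "real poly \<Rightarrow> nat \<Rightarrow> real \<Rightarrow> real" where
  "poly_derivs p j = poly ((pderiv ^^ j) p)"

lemma poly_derivs_linear:
  "poly_derivs (smult a p + smult b q) = (\<lambda>j t. a * poly_derivs p j t + b * poly_derivs q j t)"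
  by (simp add: poly_derivs_def fun_eq_iff higher_pderiv_add higher_pderiv_smult)

lemma poly_derivs_has_real_derivative:
  "(poly_derivs p j has_real_derivative poly_derivs p (Suc j) t) (at t within S)"
  by (simp add: poly_derivs_def has_field_derivative_at_within poly_DERIV)

lemma higher_pderiv_eq_const:
  fixes p :: "'a::{idom,semiring_char_0} poly"
  assumes "degree p \<le> k"
  shows "(pderiv ^^ k) p = [:fact k * coeff p k:]"
proof -
  have "degree ((pderiv ^^ k) p) = 0" using assms by (simp add: degree_higher_pderiv)
  then have "(pderiv ^^ k) p = [:coeff ((pderiv ^^ k) p) 0:]" by (rule degree_0_id[symmetric])
  then show ?thesis by (simp add: coeff_higher_pderiv pochhammer_fact)
qed

lemma poly_higher_pderiv_eq_0_iff:
  fixes p :: "'a::field_char_0 poly"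
  assumes "p \<noteq> 0" and "j \<le> order a p"
  shows "poly ((pderiv ^^ j) p) a = 0 \<longleftrightarrow> j < order a p"
proof -
  have "(pderiv ^^ j) p \<noteq> 0 \<and> order a ((pderiv ^^ j) p) = order a p - j"
    using assms(2)
  proof (induction j)
    case (Suc j)
    define q where "q = (pderiv ^^ j) p"
    have q: "q \<noteq> 0" "order a q = order a p - j" using Suc by (auto simp: q_def)
    then have root: "poly q a = 0" using Suc.prems by (simp add: order_root)
    have "pderiv q \<noteq> 0"
    proof
      assume "pderiv q = 0"
      then obtain h where "q = [:h:]" using pderiv_iszero by blast
      then show False using q(1) root by simp
    qed
    then show ?case using order_pderiv[OF q(1) root] q(2) by (simp add: q_def)
  qed (use assms(1) in simp)
  then show ?thesis by (auto simp: order_root)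
qed

definition node_poly :: "'a::comm_ring_1 multiset \<Rightarrow> 'a poly" where
  "node_poly Z = (\<Prod>w\<in>#Z. [:-w, 1:])"

lemma node_poly_empty [simp]: "node_poly {#} = 1"
  and node_poly_add_mset: "node_poly (add_mset a Z) = [:-a, 1:] * node_poly Z"
  by (simp_all add: node_poly_def)

lemma node_poly_nonzero [simp]: "node_poly Z \<noteq> (0 :: 'a::idom poly)"
  by (induction Z) (simp_all add: node_poly_add_mset del: mult_pCons_left)

lemma node_poly_monic:
  fixes Z :: "'a::idom multiset"
  shows "degree (node_poly Z) = size Z \<and> coeff (node_poly Z) (size Z) = 1"
proof (induction Z)
  case (add a Z)
  have "degree ([:-a, 1:] * node_poly Z) = degree [:-a, 1:] + degree (node_poly Z)"
    by (rule degree_mult_eq) simp_all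
  then have "degree (node_poly (add_mset a Z)) = size (add_mset a Z)"
    using add by (simp add: node_poly_add_mset)
  moreover have "lead_coeff (node_poly (add_mset a Z)) = 1"
    using add by (simp only: node_poly_add_mset lead_coeff_mult) simp
  ultimately show ?case by simp
qed simp

lemma order_node_poly:
  fixes Z :: "'a::idom multiset"
  shows "order z (node_poly Z) = count Z z"
proof (induction Z)
  case (add a Z)
  have "order z [:-a, 1:] = (if z = a then 1 else 0)"
    using order_power_n_n[of a 1] by (auto intro: order_0I)
  then show ?case
    using add order_mult[of "[:-a, 1:]" "node_poly Z" z] by (simp add: node_poly_add_mset del: mult_pCons_left)
qed simp

lemma poly_derivs_node_poly_eq_0_iff:
  "j \<le> count Z z \<Longrightarrow> poly_derivs (node_poly Z) j z = 0 \<longleftrightarrow> j < count Z z"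
  using poly_higher_pderiv_eq_0_iff[of "node_poly Z" j z] node_poly_monic[of Z]
  by (auto simp: poly_derivs_def order_node_poly)

lemma divdiff_node_poly_eq_0:
  assumes "mset xs \<subseteq># Z"
  shows "divdiff (poly_derivs (node_poly Z)) xs = 0"
proof (rule divdiff_eq_0_if_node_derivs_0, intro allI impI)
  fix z j assume "j < count (mset xs) z"
  then have "j < count Z z" using assms by (meson mset_subset_eq_count order_less_le_trans)
  then show "poly_derivs (node_poly Z) j z = 0" by (simp add: poly_derivs_node_poly_eq_0_iff)
qed

lemma hermite_interpolant_exists:
  "\<exists>p. degree p \<le> size Z - 1 \<and> (\<forall>z j. j < count Z z \<longrightarrow> poly_derivs p j z = D j z)"
proof (induction Z)
  case empty
  show ?case by (intro exI[of _ 0]) simp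
next
  case (add x Z)
  then obtain p where p: "degree p \<le> size Z - 1" "\<forall>z j. j < count Z z \<longrightarrow> poly_derivs p j z = D j z"
    by blast
  define \<mu> where "\<mu> = count Z x"
  have nz: "poly_derivs (node_poly Z) \<mu> x \<noteq> 0"
    using poly_derivs_node_poly_eq_0_iff[of \<mu> Z x] by (simp add: \<mu>_def)
  define c where "c = (D \<mu> x - poly_derivs p \<mu> x) / poly_derivs (node_poly Z) \<mu> x"
  define p' where "p' = smult 1 p + smult c (node_poly Z)"
  have derivs_p': "poly_derivs p' = (\<lambda>j t. 1 * poly_derivs p j t + c * poly_derivs (node_poly Z) j t)"
    unfolding p'_def by (rule poly_derivs_linear)
  have "degree p' \<le> size Z"
    using p(1) node_poly_monic[of Z] degree_add_le_max[of "smult 1 p" "smult c (node_poly Z)"]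
      degree_smult_le[of c "node_poly Z"] by (auto simp: p'_def)
  moreover have "poly_derivs p' j z = D j z" if j: "j < count (add_mset x Z) z" for j z
  proof (cases "j < count Z z")
    case True
    then show ?thesis using p(2) poly_derivs_node_poly_eq_0_iff[of j Z z] derivs_p' by simp
  next
    case False
    then have "z = x" "j = \<mu>" using j by (auto simp: \<mu>_def split: if_splits)
    then show ?thesis using derivs_p' nz by (simp add: c_def)
  qed
  ultimately show ?case by (intro exI[of _ p']) simp
qed

(* Write p = q + c * node_poly (add_mset a C) with degree q <= size C: the hypothesis
   makes q contribute equally on A and B, and the node polynomial vanishes on A while
   node_poly (add_mset a C) = node_poly (add_mset b C) + (b - a) * node_poly C. *)

lemma divdiff_poly_derivs_exchange_node:
  assumes lower: "\<And>ys q. length ys = Suc (size C) \<Longrightarrow> degree q \<le> size C \<Longrightarrow>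
      divdiff (poly_derivs q) ys = coeff q (size C)"
    and A: "mset A = add_mset a C" and B: "mset B = add_mset b C"
    and deg: "degree p \<le> Suc (size C)"
  shows "divdiff (poly_derivs p) B - divdiff (poly_derivs p) A = coeff p (Suc (size C)) * (b - a)"
proof -
  define c where "c = coeff p (Suc (size C))"
  define w where "w = node_poly (add_mset a C)"
  define q where "q = smult 1 p + smult (-c) w"
  have w: "degree w = Suc (size C)" "coeff w (Suc (size C)) = 1"
    using node_poly_monic[of "add_mset a C"] by (auto simp: w_def)
  have "degree q \<le> Suc (size C)"
    using deg w degree_add_le_max[of "smult 1 p" "smult (-c) w"] degree_smult_le[of "-c" w] by (auto simp: q_def)
  moreover have "coeff q (Suc (size C)) = 0" using w by (simp add: q_def c_def)
  ultimately have deg_q: "degree q \<le> size C"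
    by (metis eq_zero_or_degree_less degree_0 le_SucE less_Suc_eq_le zero_le)
  have len: "length A = Suc (size C)" "length B = Suc (size C)"
    using A B by (metis size_add_mset size_mset)+
  have w_A: "divdiff (poly_derivs w) A = 0"
    unfolding w_def by (rule divdiff_node_poly_eq_0) (simp add: A)
  have "w = smult 1 (node_poly (add_mset b C)) + smult (b - a) (node_poly C)"
    unfolding w_def node_poly_add_mset
    by (simp add: poly_eq_poly_eq_iff[symmetric] fun_eq_iff algebra_simps)
  then have "divdiff (poly_derivs w) B
      = 1 * divdiff (poly_derivs (node_poly (add_mset b C))) B + (b - a) * divdiff (poly_derivs (node_poly C)) B"
    by (simp only: poly_derivs_linear divdiff_linear)
  also have "\<dots> = b - a"
    using divdiff_node_poly_eq_0[of B "add_mset b C"] lower[OF len(2), of "node_poly C"] node_poly_monic[of C]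
    by (simp add: B)
  finally have w_B: "divdiff (poly_derivs w) B = b - a" .
  have p: "p = smult 1 q + smult c w" by (simp add: q_def)
  have "divdiff (poly_derivs p) B - divdiff (poly_derivs p) A
      = (1 * divdiff (poly_derivs q) B + c * divdiff (poly_derivs w) B)
        - (1 * divdiff (poly_derivs q) A + c * divdiff (poly_derivs w) A)"
    by (subst (1 2) p) (simp only: poly_derivs_linear divdiff_linear)
  also have "\<dots> = c * (b - a)" using lower[OF len(1) deg_q] lower[OF len(2) deg_q] w_A w_B by simp
  finally show ?thesis by (simp add: c_def)
qed

lemma divdiff_poly_derivs:
  "length ys = Suc k \<Longrightarrow> degree p \<le> k \<Longrightarrow> divdiff (poly_derivs p) ys = coeff p k"
proof (induction k arbitrary: ys p)
  case 0
  then obtain z where ys: "ys = [z]" by (metis length_0_conv length_Suc_conv)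
  have const: "p = [:coeff p 0:]" using 0 by (metis degree_0_id le_zero_eq)
  have "divdiff (poly_derivs p) ys = poly p z" by (simp add: ys divdiff_Cons_const poly_derivs_def)
  also have "\<dots> = coeff p 0" by (subst const) simp
  finally show ?case .
next
  case (Suc k)
  then obtain x0 xs where ys: "ys = x0 # xs" and len: "length xs = Suc k" by (metis length_Suc_conv)
  show ?case
  proof (cases "\<forall>y\<in>set xs. y = x0")
    case True
    then show ?thesis
      using higher_pderiv_eq_const[OF Suc.prems(2)] len by (simp add: ys divdiff_Cons_const poly_derivs_def)
  next
    case False
    define y where "y = hd (filter (\<lambda>y. y \<noteq> x0) xs)"
    have "filter (\<lambda>y. y \<noteq> x0) xs \<noteq> []" using False by (auto simp: filter_empty_conv)
    then have "y \<in> set (filter (\<lambda>y. y \<noteq> x0) xs)" unfolding y_def by (rule hd_in_set)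
    then have y: "y \<in> set xs" "y \<noteq> x0" by auto
    define C where "C = mset (remove1 y xs)"
    have size_C: "size C = k" unfolding C_def size_mset using len y by (simp add: length_remove1)
    have "mset (x0 # remove1 y xs) = add_mset x0 C" and "mset xs = add_mset y C"
      using y by (simp_all add: C_def)
    from divdiff_poly_derivs_exchange_node[of C, unfolded size_C, OF Suc.IH this Suc.prems(2)]
    have "divdiff (poly_derivs p) xs - divdiff (poly_derivs p) (x0 # remove1 y xs) = coeff p (Suc k) * (y - x0)" .
    then show ?thesis unfolding ys divdiff_Cons_nonconst[OF False y_def] using y by simp
  qed
qed

lemma divdiff_eq_coeff_interpolant:
  assumes "length xs = Suc k" and "degree p \<le> k"
    and "\<forall>z j. j < count (mset xs) z \<longrightarrow> poly_derivs p j z = D j z"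
  shows "divdiff D xs = coeff p k"
  using divdiff_cong_node_derivs[OF assms(3)] divdiff_poly_derivs[OF assms(1,2)] by simp

lemma divdiff_recurrence:
  assumes A: "mset A = add_mset a C" and B: "mset B = add_mset b C"
    and zs: "mset zs = add_mset a (add_mset b C)"
  shows "divdiff D B - divdiff D A = (b - a) * divdiff D zs"
proof -
  obtain p where deg: "degree p \<le> size (mset zs) - 1"
    and p: "\<forall>z j. j < count (mset zs) z \<longrightarrow> poly_derivs p j z = D j z"
    using hermite_interpolant_exists by blast
  have deg_p: "degree p \<le> Suc (size C)" using deg zs by simp
  have "length zs = Suc (Suc (size C))" by (metis zs size_mset size_add_mset)
  then have "divdiff D zs = coeff p (Suc (size C))"
    by (rule divdiff_eq_coeff_interpolant[OF _ deg_p p])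
  moreover have "divdiff D ys = divdiff (poly_derivs p) ys" if "mset ys \<subseteq># mset zs" for ys
    using p that by (intro divdiff_cong_node_derivs) (metis mset_subset_eq_count order_less_le_trans)
  then have "divdiff D A = divdiff (poly_derivs p) A" "divdiff D B = divdiff (poly_derivs p) B"
    by (simp_all add: A B zs)
  moreover note divdiff_poly_derivs_exchange_node[OF divdiff_poly_derivs A B deg_p]
  ultimately show ?thesis by simp
qed

section \<open>The generalized Rolle theorem\<close>

lemma rolle_in_interval:
  fixes f f' :: "real \<Rightarrow> real"
  assumes der: "\<forall>t\<in>{a..b}. (f has_real_derivative f' t) (at t within {a..b})"
    and "a \<le> s" "s < t" "t \<le> b" "f s = f t"
  shows "\<exists>\<xi>. s < \<xi> \<and> \<xi> < t \<and> f' \<xi> = 0"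
proof -
  have "continuous_on {a..b} f" using der by (intro DERIV_continuous_on) auto
  then have "continuous_on {s..t} f" by (rule continuous_on_subset) (use assms in auto)
  moreover have derivative: "(f has_real_derivative f' x) (at x)" if "s < x" "x < t" for x
  proof -
    have "(f has_real_derivative f' x) (at x within {a..b})" using der that assms by auto
    then show ?thesis using at_within_Icc_at[of a x b] that assms by simp
  qed
  ultimately obtain \<xi> where "s < \<xi>" "\<xi> < t" "(f has_real_derivative 0) (at \<xi>)"
    using Rolle[of s t f] assms real_differentiable_def by metis
  then show ?thesis using DERIV_unique[OF derivative] by blast
qed

lemma rolle_zeros_between:
  fixes f f' :: "real \<Rightarrow> real"
  assumes der: "\<forall>t\<in>{a..b}. (f has_real_derivative f' t) (at t within {a..b})"
    and "finite S" "S \<noteq> {}" "S \<subseteq> {a..b}" "\<forall>z\<in>S. f z = 0"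
  shows "\<exists>R. finite R \<and> card R + 1 = card S \<and> R \<subseteq> {Min S<..<Max S} - S \<and> (\<forall>z\<in>R. f' z = 0)"
  using assms(2-)
proof (induction S rule: finite_linorder_max_induct)
  case (insert m A)
  show ?case
  proof (cases "A = {}")
    case True
    then show ?thesis by (intro exI[of _ "{}"]) simp
  next
    case False
    obtain R where R: "finite R" "card R + 1 = card A" "R \<subseteq> {Min A<..<Max A} - A" "\<forall>z\<in>R. f' z = 0"
      using insert False by auto
    have A_le: "\<forall>x\<in>A. Min A \<le> x \<and> x \<le> Max A" using insert.hyps(1) by simp
    have "Min A \<in> A" "Max A \<in> A" using insert.hyps(1) False by simp_all
    then have "Max A < m" "a \<le> Max A" using insert by auto
    then obtain \<xi> where \<xi>: "Max A < \<xi>" "\<xi> < m" "f' \<xi> = 0"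
      using rolle_in_interval[OF der, of "Max A" m] insert.prems \<open>Max A \<in> A\<close> by auto
    have "Min (insert m A) = Min A" "Max (insert m A) = m"
      using insert.hyps \<open>Min A \<in> A\<close> \<open>Max A \<in> A\<close> False by (simp_all add: Min_insert Max_insert)
    moreover have "R \<subseteq> {Min A<..<m} - insert m A" using R(3) \<open>Max A < m\<close> by fastforce
    moreover have "\<xi> \<in> {Min A<..<m} - insert m A"
      using \<xi> A_le \<open>Min A \<in> A\<close> by fastforce
    moreover have "card (insert \<xi> R) + 1 = card (insert m A)"
      using R(1,2,3) \<xi>(1) insert.hyps by (auto simp: card_insert_if)
    ultimately show ?thesis using R(1,4) \<xi>(3) by (intro exI[of _ "insert \<xi> R"]) auto
  qed
qed simp

lemma derivative_node_zeros:
  assumes der: "\<forall>t\<in>{a..b}. (D 0 has_real_derivative D 1 t) (at t within {a..b})"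
    and Z: "Z \<noteq> {#}" "set_mset Z \<subseteq> {a..b}" and zero: "\<forall>z j. j < count Z z \<longrightarrow> D j z = 0"
  shows "\<exists>Z'. size Z' + 1 = size Z \<and> set_mset Z' \<subseteq> {a..b} \<and> (\<forall>z j. j < count Z' z \<longrightarrow> D (Suc j) z = 0)"
proof -
  define S where "S = set_mset Z"
  have "\<forall>z\<in>S. D 0 z = 0" using zero by (simp add: S_def)
  then obtain R where R: "finite R" "card R + 1 = card S" "R \<subseteq> {Min S<..<Max S} - S" "\<forall>z\<in>R. D 1 z = 0"
    using rolle_zeros_between[OF der, of S] Z by (auto simp: S_def)
  have "Min S \<in> S" "Max S \<in> S" using Z by (simp_all add: S_def)
  then have R_ab: "R \<subseteq> {a..b}" using R(3) Z(2) by (fastforce simp: S_def)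
  \<comment> \<open>each node loses one multiplicity; the Rolle points between distinct nodes are added\<close>
  define Z' where "Z' = (Z - mset_set S) + mset_set R"
  have "mset_set S \<subseteq># Z" by (simp add: S_def mset_set_set_mset_msubset)
  then have "size (Z - mset_set S) = size Z - card S" by (simp add: size_Diff_submset)
  moreover have "card S \<le> size Z"
    using \<open>mset_set S \<subseteq># Z\<close> size_mset_mono[of "mset_set S" Z] by simp
  ultimately have "size Z' + 1 = size Z"
    using R(2) by (simp only: Z'_def size_union size_mset_set)
  moreover have "set_mset Z' \<subseteq> {a..b}" using Z(2) R_ab R(1) by (auto simp: Z'_def dest: in_diffD)
  moreover have "D (Suc j) z = 0" if "j < count Z' z" for z j
  proof (cases "z \<in> S")
    case True
    then have "z \<notin> R" using R(3) by auto
    then show ?thesis using that True zero by (simp add: Z'_def S_def)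
  next
    case False
    then show ?thesis using that R(1,4) by (auto simp: Z'_def S_def not_in_iff count_mset_set' split: if_splits)
  qed
  ultimately show ?thesis by blast
qed

lemma generalized_rolle:
  assumes "size Z = Suc k" "set_mset Z \<subseteq> {a..b}"
    and "\<forall>j<k. \<forall>t\<in>{a..b}. (D j has_real_derivative D (Suc j) t) (at t within {a..b})"
    and "\<forall>z j. j < count Z z \<longrightarrow> D j z = 0"
  shows "\<exists>\<xi>\<in>{a..b}. D k \<xi> = 0"
  using assms
proof (induction k arbitrary: D Z)
  case 0
  then obtain z where z: "z \<in># Z" by (metis multiset_nonemptyE size_empty nat.distinct(1))
  then have "D 0 z = 0" using "0.prems"(4) by simp
  then show ?case using z "0.prems"(2) by blast
next
  case (Suc k)
  then obtain Z' where "size Z' + 1 = size Z" "set_mset Z' \<subseteq> {a..b}"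
    "\<forall>z j. j < count Z' z \<longrightarrow> D (Suc j) z = 0"
    using derivative_node_zeros[of a b D Z] by fastforce
  then show ?case using Suc.IH[of Z' "\<lambda>j. D (Suc j)"] Suc.prems by auto
qed

lemma divdiff_mean_value:
  assumes der: "\<forall>j<k. \<forall>t\<in>{a..b}. (D j has_real_derivative D (Suc j) t) (at t within {a..b})"
    and len: "length xs = Suc k" and sub: "set xs \<subseteq> {a..b}"
  shows "\<exists>\<xi>\<in>{a..b}. divdiff D xs = D k \<xi> / fact k"
proof -
  obtain p where deg: "degree p \<le> size (mset xs) - 1"
    and p: "\<forall>z j. j < count (mset xs) z \<longrightarrow> poly_derivs p j z = D j z"
    using hermite_interpolant_exists by blast
  have deg_p: "degree p \<le> k" using deg len by simp
  define E where "E = (\<lambda>j t. D j t - poly_derivs p j t)"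
  have "\<forall>j<k. \<forall>t\<in>{a..b}. (E j has_real_derivative E (Suc j) t) (at t within {a..b})"
    using der unfolding E_def by (blast intro: DERIV_diff poly_derivs_has_real_derivative)
  then obtain \<xi> where \<xi>: "\<xi> \<in> {a..b}" "E k \<xi> = 0"
    using generalized_rolle[of "mset xs" k a b E] len sub p by (auto simp: E_def)
  have "poly_derivs p k \<xi> = fact k * coeff p k"
    using higher_pderiv_eq_const[OF deg_p] by (simp add: poly_derivs_def)
  then have "divdiff D xs = D k \<xi> / fact k"
    using divdiff_eq_coeff_interpolant[OF len deg_p p] \<xi>(2) by (simp add: E_def)
  then show ?thesis using \<xi>(1) by blast
qed

section \<open>The modulus of smoothness and \<open>\<Lambda>\<^sub>r\<close>\<close>

lemma Delta_1:
  "Delta 1 u g a b x = (if a \<le> x - u / 2 \<and> x + u / 2 \<le> b then g (x + u / 2) - g (x - u / 2) else 0)"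
  by (simp add: Delta_def)

lemma bdd_above_Delta_1_values:
  assumes "continuous_on {a..b} g"
  shows "bdd_above (insert 0 {\<bar>Delta 1 u g a b x\<bar> | u x. 0 < u \<and> u \<le> t \<and> x \<in> {a..b}})"
proof -
  obtain M where M: "\<forall>s\<in>{a..b}. \<bar>g s\<bar> \<le> M"
    using compact_imp_bounded[OF compact_continuous_image[OF assms compact_Icc]]
    by (auto simp: bounded_iff)
  have "\<bar>Delta 1 u g a b x\<bar> \<le> 2 * \<bar>M\<bar>" if "0 < u" for u x
    unfolding Delta_1 using that M[rule_format, of "x + u / 2"] M[rule_format, of "x - u / 2"] by auto
  then show ?thesis by (intro bdd_aboveI[of _ "2 * \<bar>M\<bar>"]) auto
qed

lemma omega_1_nonneg: "continuous_on {a..b} g \<Longrightarrow> 0 \<le> omega 1 g t a b"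
  unfolding omega_def by (rule cSup_upper[OF _ bdd_above_Delta_1_values]) simp_all

lemma abs_diff_le_omega_1:
  assumes cont: "continuous_on {a..b} g" and "s \<in> {a..b}" "t \<in> {a..b}"
  shows "\<bar>g t - g s\<bar> \<le> omega 1 g (b - a) a b"
proof -
  have increasing: "\<bar>g t' - g s'\<bar> \<le> omega 1 g (b - a) a b"
    if "s' \<in> {a..b}" "t' \<in> {a..b}" "s' < t'" for s' t'
  proof -
    have "(s' + t') / 2 + (t' - s') / 2 = t'" "(s' + t') / 2 - (t' - s') / 2 = s'"
      by (simp_all add: field_simps)
    then have "\<bar>g t' - g s'\<bar> = \<bar>Delta 1 (t' - s') g a b ((s' + t') / 2)\<bar>"
      unfolding Delta_1 using that by simp
    moreover have "0 < t' - s'" "t' - s' \<le> b - a" "(s' + t') / 2 \<in> {a..b}" using that by auto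
    ultimately have "\<bar>g t' - g s'\<bar> \<in> insert 0 {\<bar>Delta 1 u g a b x\<bar> | u x. 0 < u \<and> u \<le> b - a \<and> x \<in> {a..b}}"
      by blast
    then show ?thesis unfolding omega_def by (rule cSup_upper[OF _ bdd_above_Delta_1_values[OF cont]])
  qed
  consider "s = t" | "s < t" | "t < s" by linarith
  then show ?thesis
    using assms increasing[of s t] increasing[of t s] omega_1_nonneg[OF cont]
    by cases (simp_all add: abs_minus_commute)
qed

lemma omega_1_saturates:
  assumes "b - a \<le> v"
  shows "omega 1 g v a b = omega 1 g (b - a) a b"
proof -
  have "insert 0 {\<bar>Delta 1 u g a b x\<bar> | u x. 0 < u \<and> u \<le> v \<and> x \<in> {a..b}}
      = insert 0 {\<bar>Delta 1 u g a b x\<bar> | u x. 0 < u \<and> u \<le> b - a \<and> x \<in> {a..b}}" (is "?V = ?L")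
  proof
    show "?L \<subseteq> ?V" using assms by force
    show "?V \<subseteq> ?L"
    proof
      fix y assume "y \<in> ?V"
      then consider "y = 0" | u x where "y = \<bar>Delta 1 u g a b x\<bar>" "0 < u" "u \<le> v" "x \<in> {a..b}"
        by blast
      then show "y \<in> ?L"
      proof cases
        case 2
        show ?thesis
        proof (cases "u \<le> b - a")
          case True
          then show ?thesis using 2 by blast
        next
          case False
          then have "Delta 1 u g a b x = 0" unfolding Delta_1 by auto
          then show ?thesis using 2 by simp
        qed
      qed simp
    qed
  qed
  then show ?thesis unfolding omega_def by simp
qed

lemma integral_inverse_square_const:
  fixes L W :: real
  assumes "0 < L"
  shows "integral {L..2 * L} (\<lambda>u. u powi (-2) * W) = W / (2 * L)"
proof -
  have "((\<lambda>u. u powi (-2) * W) has_integral (- W / (2 * L) - - W / L)) {L..2 * L}"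
  proof (rule fundamental_theorem_of_calculus[where f = "\<lambda>u. - W / u"])
    fix u assume "u \<in> {L..2 * L}"
    then have "0 < u" using assms by auto
    then have "((\<lambda>u. - W / u) has_real_derivative u powi (-2) * W) (at u)"
      by (auto intro!: derivative_eq_intros simp: power_int_def power2_eq_square field_simps)
    then show "((\<lambda>u. - W / u) has_vector_derivative u powi (-2) * W) (at u within {L..2 * L})"
      by (simp add: has_real_derivative_iff_has_vector_derivative has_vector_derivative_at_within)
  qed (use assms in simp)
  then have "integral {L..2 * L} (\<lambda>u. u powi (-2) * W) = - W / (2 * L) - - W / L"
    by (rule integral_unique)
  then show ?thesis using assms by (simp add: field_simps)
qed

lemma Lambda_minimal_nodes:
  "Lambda r x (r + 1) \<phi> = integral {x (r + 1) - x 0 .. 2 * (x (r + 1) - x 0)} (\<lambda>u. u powi (-2) * \<phi> u)"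
proof -
  have "(p \<le> r + 1 \<and> q \<le> r + 1 \<and> p + r + 1 \<le> q) \<longleftrightarrow> p = 0 \<and> q = r + 1" for p q :: nat
    by auto
  then have "Lambda r x (r + 1) \<phi> = Lambda_pqr 0 (r + 1) r x (r + 1) \<phi>"
    by (simp add: Lambda_def)
  moreover have "dpq x (r + 1) 0 (r + 1) = 2 * (x (r + 1) - x 0)"
    by (simp add: dpq_def yext_def)
  moreover have "int 0 + int r - int (r + 1) - 1 = -2" by simp
  ultimately show ?thesis by (simp add: Lambda_pqr_def)
qed

lemma Lambda_minimal_nodes_omega_1:
  assumes "x 0 < x (r + 1)"
  defines "L \<equiv> x (r + 1) - x 0"
  shows "Lambda r x (r + 1) (\<lambda>t. omega 1 g t (x 0) (x (r + 1))) = omega 1 g L (x 0) (x (r + 1)) / (2 * L)"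
proof -
  have "Lambda r x (r + 1) (\<lambda>t. omega 1 g t (x 0) (x (r + 1)))
      = integral {L..2 * L} (\<lambda>u. u powi (-2) * omega 1 g L (x 0) (x (r + 1)))"
    unfolding Lambda_minimal_nodes L_def
  proof (intro integral_cong)
    fix u assume "u \<in> {x (r + 1) - x 0..2 * (x (r + 1) - x 0)}"
    then show "u powi (-2) * omega 1 g u (x 0) (x (r + 1))
        = u powi (-2) * omega 1 g (x (r + 1) - x 0) (x 0) (x (r + 1))"
      using omega_1_saturates[where a = "x 0" and b = "x (r + 1)" and v = u and g = g] by simp
  qed
  also have "\<dots> = omega 1 g L (x 0) (x (r + 1)) / (2 * L)"
    using integral_inverse_square_const[of L "omega 1 g L (x 0) (x (r + 1))"] assms by simp
  finally show ?thesis .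
qed

lemma abs_divdiff_le_omega_1:
  assumes der: "\<forall>j<k. \<forall>t\<in>{a..b}. (D j has_real_derivative D (Suc j) t) (at t within {a..b})"
    and cont: "continuous_on {a..b} (D k)" and "a < b"
    and zs: "mset zs = add_mset a (add_mset b C)" and C: "size C = k" "set_mset C \<subseteq> {a..b}"
  shows "\<bar>divdiff D zs\<bar> \<le> omega 1 (D k) (b - a) a b / (fact k * (b - a))"
proof -
  obtain cs where cs: "mset cs = C" using ex_mset by blast
  obtain \<xi>a \<xi>b where \<xi>: "\<xi>a \<in> {a..b}" "\<xi>b \<in> {a..b}"
    and mean: "divdiff D (a # cs) = D k \<xi>a / fact k" "divdiff D (b # cs) = D k \<xi>b / fact k"
    using divdiff_mean_value[OF der, of "a # cs"] divdiff_mean_value[OF der, of "b # cs"] cs C \<open>a < b\<close>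
    by (auto simp flip: size_mset set_mset_mset)
  have "divdiff D zs * (fact k * (b - a)) = D k \<xi>b - D k \<xi>a"
    using divdiff_recurrence[of "a # cs" a C "b # cs" b zs D] cs zs mean by (simp add: field_simps)
  then have "\<bar>divdiff D zs\<bar> * (fact k * (b - a)) = \<bar>D k \<xi>b - D k \<xi>a\<bar>"
    using \<open>a < b\<close> by (metis abs_mult abs_of_pos fact_gt_zero diff_gt_0_iff_gt mult_pos_pos)
  also have "\<dots> \<le> omega 1 (D k) (b - a) a b" by (rule abs_diff_le_omega_1[OF cont \<xi>])
  finally show ?thesis using \<open>a < b\<close> by (simp add: pos_le_divide_eq)
qed

theorem lemma3p1:
  fixes r :: nat
  shows "\<exists>c::real. \<forall>(x :: nat \<Rightarrow> real) (f :: real \<Rightarrow> real) (D :: nat \<Rightarrow> real \<Rightarrow> real).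
     (\<forall>i<r + 1. x i \<le> x (Suc i)) \<longrightarrow> x 0 < x (r + 1) \<longrightarrow>
     (\<forall>t\<in>{x 0..x (r + 1)}. D 0 t = f t) \<longrightarrow>
     (\<forall>k<r. \<forall>t\<in>{x 0..x (r + 1)}.
        (D k has_real_derivative D (Suc k) t) (at t within {x 0..x (r + 1)})) \<longrightarrow>
     continuous_on {x 0..x (r + 1)} (D r) \<longrightarrow>
     \<bar>divdiff D (map x [0..<r + 2])\<bar>
       \<le> c * Lambda r x (r + 1) (\<lambda>t. omega 1 (D r) t (x 0) (x (r + 1)))"
proof (intro exI[of _ 2] allI impI)
  fix x :: "nat \<Rightarrow> real" and f :: "real \<Rightarrow> real" and D :: "nat \<Rightarrow> real \<Rightarrow> real"
  assume mono: "\<forall>i<r + 1. x i \<le> x (Suc i)" and lt: "x 0 < x (r + 1)"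
    and der: "\<forall>k<r. \<forall>t\<in>{x 0..x (r + 1)}. (D k has_real_derivative D (Suc k) t) (at t within {x 0..x (r + 1)})"
    and cont: "continuous_on {x 0..x (r + 1)} (D r)"
  \<comment> \<open>the premise \<open>D 0 = f\<close> only names \<open>f\<close>; the argument is about the family \<open>D\<close>\<close>
  define L where "L = x (r + 1) - x 0"
  define W where "W = omega 1 (D r) L (x 0) (x (r + 1))"
  have "set_mset (mset (map x [1..<r + 1])) \<subseteq> {x 0..x (r + 1)}"
    using lift_Suc_mono_le_upto[OF mono] by auto
  moreover note mset_map_upt_endpoints[of x r]
  ultimately have "\<bar>divdiff D (map x [0..<r + 2])\<bar> \<le> W / (fact r * L)"
    using abs_divdiff_le_omega_1[OF der cont lt] by (simp add: W_def L_def)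
  also have "\<dots> \<le> W / L"
    using lt omega_1_nonneg[OF cont] by (simp add: W_def L_def frac_le)
  also have "\<dots> = 2 * (W / (2 * L))" by simp
  also have "W / (2 * L) = Lambda r x (r + 1) (\<lambda>t. omega 1 (D r) t (x 0) (x (r + 1)))"
    using Lambda_minimal_nodes_omega_1[OF lt, of "D r"] by (simp add: W_def L_def)
  finally show "\<bar>divdiff D (map x [0..<r + 2])\<bar> \<le> 2 * Lambda r x (r + 1) (\<lambda>t. omega 1 (D r) t (x 0) (x (r + 1)))" .
qed

end
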